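(* (i) Let $W$ be a real entanglement witness on $\mathbb{C}^m\otimes\mathbb{C}^n$. If $W$ detects an entangled state $\rho$ (i.e. $\mathrm{tr}(W\rho)<0$), then $W$ also detects $\rho^*$ and $\rho^+$. Conversely, if a real entangled state $\rho$ is detected by an entanglement witness $W$, then $\rho$ is also detected by the two entanglement witnesses $W^*$ and $W^+$. (ii) An entangled state $\rho$ on $\mathbb{C}^m\otimes\mathbb{C}^n$ is detected by some real entanglement witness if and only if $\rho^+$ is a real entangled state.
   Context: An entanglement witness (EW) on $\mathbb{C}^m\otimes\mathbb{C}^n$ is a Hermitian matrix $W$ such that $\mathrm{tr}(W\sigma)\ge 0$ for every separable state $\sigma$ and $\mathrm{tr}(W\sigma)<0$ for at least one entangled state $\sigma$; $W$ detects a state $\rho$ if $\mathrm{tr}(W\rho)<0$. A real EW is an EW whose matrix (in the computational product basis) has real entries; a real state is a state whose density matrix has real entries. Separability/entanglement always refers to the standard definition over the complex Hilbert space. For a Hermitian $H$, $H^*$ is its entrywise complex conjugate and $H^+:=\frac12(H+H^* )$ is its real part. *)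

theory Defs
  imports "Jordan_Normal_Form.Matrix"
begin

text \<open>Matrices on C^m (x) C^n are complex (m*n) x (m*n) matrices of JNF type mat,
  indexed in the computational product basis: basis vector e_i (x) f_j has index i*n+j.\<close>

definition trace_mat :: "complex mat \<Rightarrow> complex" where
  "trace_mat A = (\<Sum>i<dim_row A. A $$ (i, i))"

definition kron :: "complex mat \<Rightarrow> complex mat \<Rightarrow> complex mat" where
  "kron A B = mat (dim_row A * dim_row B) (dim_col A * dim_col B)
     (\<lambda>(r, c). A $$ (r div dim_row B, c div dim_col B) * B $$ (r mod dim_row B, c mod dim_col B))"

definition hermitian :: "complex mat \<Rightarrow> bool" where
  "hermitian A \<longleftrightarrow> dim_row A = dim_col A \<and>
     (\<forall>i<dim_row A. \<forall>j<dim_row A. A $$ (i, j) = cnj (A $$ (j, i)))"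

definition psd :: "complex mat \<Rightarrow> bool" where
  "psd A \<longleftrightarrow> hermitian A \<and>
     (\<forall>v \<in> carrier_vec (dim_row A).
        0 \<le> Re (\<Sum>i<dim_row A. \<Sum>j<dim_row A. cnj (v $ i) * A $$ (i, j) * v $ j))"

definition is_state :: "nat \<Rightarrow> complex mat \<Rightarrow> bool" where
  "is_state d \<rho> \<longleftrightarrow> \<rho> \<in> carrier_mat d d \<and> psd \<rho> \<and> trace_mat \<rho> = 1"

definition separable :: "nat \<Rightarrow> nat \<Rightarrow> complex mat \<Rightarrow> bool" where
  "separable m n \<sigma> \<longleftrightarrow> \<sigma> \<in> carrier_mat (m * n) (m * n) \<and>
     (\<exists>(K::nat) (p::nat \<Rightarrow> real) A B.
        (\<forall>k<K. 0 \<le> p k \<and> is_state m (A k) \<and> is_state n (B k)) \<and>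
        (\<Sum>k<K. p k) = 1 \<and>
        (\<forall>r < m * n. \<forall>c < m * n.
           \<sigma> $$ (r, c) = (\<Sum>k<K. complex_of_real (p k) * kron (A k) (B k) $$ (r, c))))"

definition entangled :: "nat \<Rightarrow> nat \<Rightarrow> complex mat \<Rightarrow> bool" where
  "entangled m n \<rho> \<longleftrightarrow> is_state (m * n) \<rho> \<and> \<not> separable m n \<rho>"

definition detects :: "complex mat \<Rightarrow> complex mat \<Rightarrow> bool" where
  "detects W \<rho> \<longleftrightarrow> Re (trace_mat (W * \<rho>)) < 0"

definition ent_witness :: "nat \<Rightarrow> nat \<Rightarrow> complex mat \<Rightarrow> bool" where
  "ent_witness m n W \<longleftrightarrow> W \<in> carrier_mat (m * n) (m * n) \<and> hermitian W \<and>
     (\<forall>\<sigma>. separable m n \<sigma> \<longrightarrow> 0 \<le> Re (trace_mat (W * \<sigma>))) \<and>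
     (\<exists>\<sigma>. entangled m n \<sigma> \<and> detects W \<sigma>)"

definition mat_cnj :: "complex mat \<Rightarrow> complex mat" where
  "mat_cnj H = map_mat cnj H"

definition mat_realpart :: "complex mat \<Rightarrow> complex mat" where
  "mat_realpart H = (1/2 :: complex) \<cdot>\<^sub>m (H + mat_cnj H)"

definition real_mat :: "complex mat \<Rightarrow> bool" where
  "real_mat A \<longleftrightarrow> (\<forall>i<dim_row A. \<forall>j<dim_col A. Im (A $$ (i, j)) = 0)"

end

theory Submission
  imports Defs
begin

text \<open>Entrywise conjugation maps (separable) states to (separable) states, and
  \<open>Re tr (W\<^sup>* \<rho>) = Re tr (W \<rho>\<^sup>*)\<close>; averaging, \<open>Re tr (W\<^sup>+ \<rho>) = Re tr (W \<rho>\<^sup>+)\<close>.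
  So conjugating, or taking the real part of, one factor of \<open>tr (W \<rho>)\<close> does not change the
  expectation value whenever the other factor is real, and \<open>W\<^sup>*\<close>, \<open>W\<^sup>+\<close> stay nonnegative on
  separable states.  This gives (i) and the forward direction of (ii).  For the converse of (ii)
  one needs some witness \<open>W\<close> detecting the real entangled state \<open>\<rho>\<^sup>+\<close>; then \<open>W\<^sup>+\<close> is a real
  witness detecting \<open>\<rho>\<^sup>+\<close> and hence \<open>\<rho>\<close>.  That witness comes from the Horodecki separation
  argument: by Caratheodory's theorem the separable states form a compact convex set, so it
  contains a state nearest to \<open>\<rho>\<^sup>+\<close> in the Hilbert-Schmidt norm, and the supporting
  hyperplane there separates \<open>\<rho>\<^sup>+\<close> from all separable states.\<close>

section \<open>Conjugation and real part of matrices\<close>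

lemma trace_mat_mult:
  assumes "A \<in> carrier_mat d e" "B \<in> carrier_mat e d"
  shows "trace_mat (A * B) = (\<Sum>i<d. \<Sum>j<e. A $$ (i, j) * B $$ (j, i))"
  using assms unfolding trace_mat_def
  by (auto simp: scalar_prod_def atLeast0LessThan intro!: sum.cong)

lemma dim_mat_cnj [simp]:
  "dim_row (mat_cnj A) = dim_row A" "dim_col (mat_cnj A) = dim_col A"
  by (simp_all add: mat_cnj_def)

lemma index_mat_cnj [simp]:
  "i < dim_row A \<Longrightarrow> j < dim_col A \<Longrightarrow> mat_cnj A $$ (i, j) = cnj (A $$ (i, j))"
  by (simp add: mat_cnj_def)

lemma mat_cnj_carrier_iff [simp]: "mat_cnj A \<in> carrier_mat a b \<longleftrightarrow> A \<in> carrier_mat a b"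
  unfolding carrier_mat_def mem_Collect_eq dim_mat_cnj ..

lemma dim_mat_realpart [simp]:
  "dim_row (mat_realpart A) = dim_row A" "dim_col (mat_realpart A) = dim_col A"
  by (simp_all add: mat_realpart_def)

lemma index_mat_realpart [simp]:
  "i < dim_row A \<Longrightarrow> j < dim_col A \<Longrightarrow>
    mat_realpart A $$ (i, j) = (A $$ (i, j) + cnj (A $$ (i, j))) / 2"
  by (simp add: mat_realpart_def)

lemma mat_realpart_carrier_iff [simp]:
  "mat_realpart A \<in> carrier_mat a b \<longleftrightarrow> A \<in> carrier_mat a b"
  unfolding carrier_mat_def mem_Collect_eq dim_mat_realpart ..

lemma mat_cnj_mat_cnj [simp]: "mat_cnj (mat_cnj A) = A"
  by (intro eq_matI) simp_all

lemma real_mat_imp_mat_cnj_eq: "real_mat A \<Longrightarrow> mat_cnj A = A"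
  unfolding real_mat_def by (intro eq_matI) (auto simp: complex_eq_iff)

lemma real_mat_imp_mat_realpart_eq: "real_mat A \<Longrightarrow> mat_realpart A = A"
  unfolding real_mat_def by (intro eq_matI) (auto simp: complex_eq_iff)

lemma real_mat_mat_realpart: "real_mat (mat_realpart A)"
  unfolding real_mat_def by simp

lemma trace_mat_mat_cnj: "A \<in> carrier_mat d d \<Longrightarrow> trace_mat (mat_cnj A) = cnj (trace_mat A)"
  unfolding trace_mat_def by (simp add: cnj_sum)

lemma trace_mat_mat_realpart:
  "A \<in> carrier_mat d d \<Longrightarrow> trace_mat (mat_realpart A) = (trace_mat A + cnj (trace_mat A)) / 2"
  unfolding trace_mat_def by (simp add: cnj_sum sum.distrib flip: sum_divide_distrib)

lemma trace_mat_mat_cnj_mult: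
  assumes "A \<in> carrier_mat d e" "B \<in> carrier_mat e d"
  shows "trace_mat (mat_cnj A * B) = cnj (trace_mat (A * mat_cnj B))"
  using assms by (simp add: trace_mat_mult[of _ d e] cnj_sum)

lemma trace_mat_mat_realpart_mult:
  assumes "A \<in> carrier_mat d e" "B \<in> carrier_mat e d"
  shows "trace_mat (mat_realpart A * B) = (trace_mat (A * B) + trace_mat (mat_cnj A * B)) / 2"
  using assms
  by (simp add: trace_mat_mult[of _ d e] ring_distribs sum.distrib flip: sum_divide_distrib)

lemma trace_mat_mult_mat_realpart:
  assumes "A \<in> carrier_mat d e" "B \<in> carrier_mat e d"
  shows "trace_mat (A * mat_realpart B) = (trace_mat (A * B) + trace_mat (A * mat_cnj B)) / 2"
  using assms
  by (simp add: trace_mat_mult[of _ d e] ring_distribs sum.distrib flip: sum_divide_distrib)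

lemma Re_trace_mat_cnj_mult:
  assumes "A \<in> carrier_mat d d" "B \<in> carrier_mat d d"
  shows "Re (trace_mat (mat_cnj A * B)) = Re (trace_mat (A * mat_cnj B))"
  using trace_mat_mat_cnj_mult[OF assms] by simp

lemma Re_trace_mat_realpart_mult:
  assumes "A \<in> carrier_mat d d" "B \<in> carrier_mat d d"
  shows "Re (trace_mat (mat_realpart A * B)) = Re (trace_mat (A * mat_realpart B))"
  using assms Re_trace_mat_cnj_mult[OF assms]
  by (simp add: trace_mat_mat_realpart_mult trace_mat_mult_mat_realpart)

lemma detects_mat_cnj_iff:
  "W \<in> carrier_mat d d \<Longrightarrow> \<rho> \<in> carrier_mat d d \<Longrightarrow>
    detects (mat_cnj W) \<rho> \<longleftrightarrow> detects W (mat_cnj \<rho>)"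
  unfolding detects_def by (simp add: Re_trace_mat_cnj_mult)

lemma detects_mat_realpart_iff:
  "W \<in> carrier_mat d d \<Longrightarrow> \<rho> \<in> carrier_mat d d \<Longrightarrow>
    detects (mat_realpart W) \<rho> \<longleftrightarrow> detects W (mat_realpart \<rho>)"
  unfolding detects_def by (simp add: Re_trace_mat_realpart_mult)

section \<open>Conjugation of states, separable states and witnesses\<close>

definition quad_form :: "complex mat \<Rightarrow> complex vec \<Rightarrow> complex" where
  "quad_form A v = (\<Sum>i<dim_row A. \<Sum>j<dim_row A. cnj (v $ i) * A $$ (i, j) * v $ j)"

lemma psd_iff_quad_form:
  "psd A \<longleftrightarrow> hermitian A \<and> (\<forall>v \<in> carrier_vec (dim_row A). 0 \<le> Re (quad_form A v))"
  unfolding psd_def quad_form_def ..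

lemma hermitianD:
  "hermitian A \<Longrightarrow> i < dim_row A \<Longrightarrow> j < dim_row A \<Longrightarrow> A $$ (i, j) = cnj (A $$ (j, i))"
  unfolding hermitian_def by blast

lemma hermitian_square: "hermitian A \<Longrightarrow> dim_col A = dim_row A"
  unfolding hermitian_def by simp

lemma hermitian_mat_cnj:
  assumes "hermitian A" shows "hermitian (mat_cnj A)"
  unfolding hermitian_def
proof (intro conjI allI impI)
  fix i j assume "i < dim_row (mat_cnj A)" "j < dim_row (mat_cnj A)"
  then show "mat_cnj A $$ (i, j) = cnj (mat_cnj A $$ (j, i))"
    using hermitianD[OF assms, of i j] hermitian_square[OF assms] by simp
qed (use hermitian_square[OF assms] in simp)

lemma hermitian_mat_realpart:
  assumes "hermitian A" shows "hermitian (mat_realpart A)"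
  unfolding hermitian_def
proof (intro conjI allI impI)
  fix i j assume "i < dim_row (mat_realpart A)" "j < dim_row (mat_realpart A)"
  then show "mat_realpart A $$ (i, j) = cnj (mat_realpart A $$ (j, i))"
    using hermitianD[OF assms, of i j] hermitian_square[OF assms] by simp
qed (use hermitian_square[OF assms] in simp)

lemma quad_form_mat_cnj:
  "dim_col A = dim_row A \<Longrightarrow> v \<in> carrier_vec (dim_row A) \<Longrightarrow>
    quad_form (mat_cnj A) v = cnj (quad_form A (map_vec cnj v))"
  unfolding quad_form_def by (simp add: cnj_sum)

lemma quad_form_mat_realpart:
  "dim_col A = dim_row A \<Longrightarrow>
    quad_form (mat_realpart A) v = (quad_form A v + quad_form (mat_cnj A) v) / 2"
  unfolding quad_form_def
  by (simp add: sum.distrib field_simps flip: sum_divide_distrib)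

lemma psd_mat_cnj:
  assumes "psd A" shows "psd (mat_cnj A)"
proof -
  have "dim_col A = dim_row A" using assms hermitian_square unfolding psd_def by simp
  then show ?thesis
    using assms unfolding psd_iff_quad_form
    by (auto simp: hermitian_mat_cnj quad_form_mat_cnj)
qed

lemma psd_mat_realpart:
  assumes "psd A" shows "psd (mat_realpart A)"
proof -
  have "dim_col A = dim_row A" using assms hermitian_square unfolding psd_def by simp
  then show ?thesis
    using assms psd_mat_cnj[OF assms] unfolding psd_iff_quad_form
    by (auto simp: hermitian_mat_realpart quad_form_mat_realpart)
qed

lemma is_state_mat_cnj: "is_state d A \<Longrightarrow> is_state d (mat_cnj A)"
  unfolding is_state_def using trace_mat_mat_cnj[of A d] by (simp add: psd_mat_cnj)

lemma is_state_mat_realpart: "is_state d A \<Longrightarrow> is_state d (mat_realpart A)"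
  unfolding is_state_def using trace_mat_mat_realpart[of A d] by (simp add: psd_mat_realpart)

lemma kron_mat_cnj: "kron (mat_cnj A) (mat_cnj B) = mat_cnj (kron A B)"
proof (intro eq_matI)
  fix i j assume "i < dim_row (mat_cnj (kron A B))" "j < dim_col (mat_cnj (kron A B))"
  then have ij: "i < dim_row A * dim_row B" "j < dim_col A * dim_col B"
    by (simp_all add: kron_def)
  then have "0 < dim_row B" "0 < dim_col B" by (auto intro: ccontr)
  with ij show "kron (mat_cnj A) (mat_cnj B) $$ (i, j) = mat_cnj (kron A B) $$ (i, j)"
    by (simp add: kron_def less_mult_imp_div_less)
qed (simp_all add: kron_def)

lemma kron_carrier_mat:
  "A \<in> carrier_mat a a' \<Longrightarrow> B \<in> carrier_mat b b' \<Longrightarrow> kron A B \<in> carrier_mat (a * b) (a' * b')"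
  unfolding kron_def by simp

lemma separable_carrier: "separable m n \<sigma> \<Longrightarrow> \<sigma> \<in> carrier_mat (m * n) (m * n)"
  unfolding separable_def by simp

lemma separable_mat_cnj:
  assumes "separable m n \<sigma>" shows "separable m n (mat_cnj \<sigma>)"
proof -
  obtain K :: nat and p A B where
    ens: "\<forall>k<K. 0 \<le> p k \<and> is_state m (A k) \<and> is_state n (B k)" "(\<Sum>k<K. p k) = 1" and
    carr: "\<sigma> \<in> carrier_mat (m * n) (m * n)" and
    mix: "\<forall>r < m * n. \<forall>c < m * n. \<sigma> $$ (r, c) = (\<Sum>k<K. complex_of_real (p k) * kron (A k) (B k) $$ (r, c))"
    using assms unfolding separable_def by (elim conjE exE) blast
  have "mat_cnj \<sigma> $$ (r, c) =
      (\<Sum>k<K. complex_of_real (p k) * kron (mat_cnj (A k)) (mat_cnj (B k)) $$ (r, c))"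
    if rc: "r < m * n" "c < m * n" for r c
  proof -
    have "mat_cnj \<sigma> $$ (r, c) = (\<Sum>k<K. complex_of_real (p k) * cnj (kron (A k) (B k) $$ (r, c)))"
      using rc carr mix by (simp add: cnj_sum)
    also have "\<dots> = (\<Sum>k<K. complex_of_real (p k) * kron (mat_cnj (A k)) (mat_cnj (B k)) $$ (r, c))"
    proof (intro sum.cong refl)
      fix k assume "k \<in> {..<K}"
      then have "kron (A k) (B k) \<in> carrier_mat (m * n) (m * n)"
        using ens(1) unfolding is_state_def by (auto intro: kron_carrier_mat)
      then show "complex_of_real (p k) * cnj (kron (A k) (B k) $$ (r, c)) =
          complex_of_real (p k) * kron (mat_cnj (A k)) (mat_cnj (B k)) $$ (r, c)"
        using rc by (simp add: kron_mat_cnj)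
    qed
    finally show ?thesis .
  qed
  with ens carr show ?thesis
    unfolding separable_def
    by (intro conjI exI[of _ K] exI[of _ p] exI[of _ "\<lambda>k. mat_cnj (A k)"] exI[of _ "\<lambda>k. mat_cnj (B k)"])
      (auto simp: is_state_mat_cnj)
qed

lemma entangled_mat_cnj: "entangled m n \<rho> \<Longrightarrow> entangled m n (mat_cnj \<rho>)"
  unfolding entangled_def using separable_mat_cnj[of m n "mat_cnj \<rho>"]
  by (auto simp: is_state_mat_cnj)

lemma ent_witness_detects_imp_not_separable:
  "ent_witness m n W \<Longrightarrow> detects W \<sigma> \<Longrightarrow> \<not> separable m n \<sigma>"
  unfolding ent_witness_def detects_def by force

lemma entangled_carrier: "entangled m n \<rho> \<Longrightarrow> \<rho> \<in> carrier_mat (m * n) (m * n)"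
  unfolding entangled_def is_state_def by simp

lemma ent_witness_mat_cnj:
  assumes W: "ent_witness m n W" shows "ent_witness m n (mat_cnj W)"
proof -
  have carr: "W \<in> carrier_mat (m * n) (m * n)" and herm: "hermitian W"
    and pos: "\<And>\<sigma>. separable m n \<sigma> \<Longrightarrow> 0 \<le> Re (trace_mat (W * \<sigma>))"
    using W unfolding ent_witness_def by auto
  obtain \<rho> where "entangled m n \<rho>" "detects W \<rho>" using W unfolding ent_witness_def by blast
  then have "entangled m n (mat_cnj \<rho>)" "detects (mat_cnj W) (mat_cnj \<rho>)"
    using carr entangled_carrier detects_mat_cnj_iff entangled_mat_cnj by fastforce+
  moreover have "0 \<le> Re (trace_mat (mat_cnj W * \<sigma>))" if "separable m n \<sigma>" for \<sigma>
    using that carr separable_carrier pos[OF separable_mat_cnj] Re_trace_mat_cnj_mult by metis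
  ultimately show ?thesis
    unfolding ent_witness_def using carr herm hermitian_mat_cnj by auto
qed

text \<open>Unlike \<open>W\<^sup>*\<close>, the real part of a witness need not detect any entangled state, hence
  the extra hypotheses.\<close>

lemma ent_witness_mat_realpart:
  assumes W: "ent_witness m n W" and "entangled m n \<rho>" "detects (mat_realpart W) \<rho>"
  shows "ent_witness m n (mat_realpart W)"
proof -
  have carr: "W \<in> carrier_mat (m * n) (m * n)" and herm: "hermitian W"
    and pos: "\<And>\<sigma>. separable m n \<sigma> \<Longrightarrow> 0 \<le> Re (trace_mat (W * \<sigma>))"
    using W unfolding ent_witness_def by auto
  have pos_cnj: "\<And>\<sigma>. separable m n \<sigma> \<Longrightarrow> 0 \<le> Re (trace_mat (mat_cnj W * \<sigma>))"
    using ent_witness_mat_cnj[OF W] unfolding ent_witness_def by blast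
  have "0 \<le> Re (trace_mat (mat_realpart W * \<sigma>))" if "separable m n \<sigma>" for \<sigma>
    using pos[OF that] pos_cnj[OF that] carr separable_carrier[OF that]
    by (simp add: trace_mat_mat_realpart_mult)
  then show ?thesis
    unfolding ent_witness_def using assms carr herm hermitian_mat_realpart by auto
qed

section \<open>Every entangled state is detected by a witness\<close>

definition product_ensemble ::
    "nat \<Rightarrow> nat \<Rightarrow> nat \<Rightarrow> (nat \<Rightarrow> real) \<Rightarrow> (nat \<Rightarrow> complex mat) \<Rightarrow> (nat \<Rightarrow> complex mat) \<Rightarrow> bool" where
  "product_ensemble m n K p A B \<longleftrightarrow>
     (\<forall>k<K. 0 \<le> p k \<and> is_state m (A k) \<and> is_state n (B k)) \<and> (\<Sum>k<K. p k) = 1"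

definition product_mixture ::
    "nat \<Rightarrow> nat \<Rightarrow> nat \<Rightarrow> (nat \<Rightarrow> real) \<Rightarrow> (nat \<Rightarrow> complex mat) \<Rightarrow> (nat \<Rightarrow> complex mat) \<Rightarrow> complex mat" where
  "product_mixture m n K p A B =
     mat (m * n) (m * n) (\<lambda>(r, c). \<Sum>k<K. complex_of_real (p k) * kron (A k) (B k) $$ (r, c))"

lemma dim_product_mixture [simp]:
  "dim_row (product_mixture m n K p A B) = m * n" "dim_col (product_mixture m n K p A B) = m * n"
  by (simp_all add: product_mixture_def)

lemma separable_iff_product_mixture:
  "separable m n \<sigma> \<longleftrightarrow> (\<exists>K p A B. product_ensemble m n K p A B \<and> \<sigma> = product_mixture m n K p A B)"
proof
  assume "separable m n \<sigma>"
  then obtain K :: nat and p A B where "product_ensemble m n K p A B"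
    "\<sigma> \<in> carrier_mat (m * n) (m * n)"
    "\<forall>r < m * n. \<forall>c < m * n. \<sigma> $$ (r, c) = (\<Sum>k<K. complex_of_real (p k) * kron (A k) (B k) $$ (r, c))"
    unfolding separable_def product_ensemble_def by (elim conjE exE) blast
  moreover from this have "\<sigma> = product_mixture m n K p A B"
    by (intro eq_matI) (auto simp: product_mixture_def)
  ultimately show "\<exists>K p A B. product_ensemble m n K p A B \<and> \<sigma> = product_mixture m n K p A B"
    by blast
next
  assume "\<exists>K p A B. product_ensemble m n K p A B \<and> \<sigma> = product_mixture m n K p A B"
  then obtain K p A B where "product_ensemble m n K p A B" "\<sigma> = product_mixture m n K p A B"
    by blast
  then show "separable m n \<sigma>"
    unfolding separable_def product_ensemble_def
    by (intro conjI exI[of _ K] exI[of _ p] exI[of _ A] exI[of _ B]) (auto simp: product_mixture_def)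
qed

lemma separableE:
  assumes "separable m n \<sigma>"
  obtains K p A B where "product_ensemble m n K p A B" "\<sigma> = product_mixture m n K p A B"
  using assms unfolding separable_iff_product_mixture by blast

lemma product_ensemble_weight_le_1:
  assumes "product_ensemble m n K p A B" "k < K" shows "p k \<le> 1"
proof -
  have "p k \<le> (\<Sum>k<K. p k)"
    using assms unfolding product_ensemble_def by (intro member_le_sum) auto
  with assms show ?thesis unfolding product_ensemble_def by simp
qed

lemma index_kron:
  assumes "A \<in> carrier_mat m m'" "B \<in> carrier_mat n n'" "r < m * n" "c < m' * n'"
  shows "kron A B $$ (r, c) = A $$ (r div n, c div n') * B $$ (r mod n, c mod n')"
  using assms unfolding kron_def by simp

lemma index_product_mixture:
  assumes "product_ensemble m n K p A B" "r < m * n" "c < m * n"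
  shows "product_mixture m n K p A B $$ (r, c) =
    (\<Sum>k<K. complex_of_real (p k) * (A k $$ (r div n, c div n) * B k $$ (r mod n, c mod n)))"
  using assms unfolding product_ensemble_def is_state_def
  by (auto simp: product_mixture_def index_kron intro!: sum.cong)

lemma hermitian_kron:
  assumes "hermitian A" "hermitian B" shows "hermitian (kron A B)"
proof -
  let ?a = "dim_row A" and ?b = "dim_row B"
  have sq: "dim_col A = ?a" "dim_col B = ?b" using assms hermitian_square by auto
  show ?thesis
    unfolding hermitian_def
  proof (intro conjI allI impI)
    fix r c assume "r < dim_row (kron A B)" "c < dim_row (kron A B)"
    then have rc: "r < ?a * ?b" "c < ?a * ?b" by (simp_all add: kron_def)
    then have "0 < ?b" by (cases "?b = 0") auto
    with rc have "r div ?b < ?a" "c div ?b < ?a" "r mod ?b < ?b" "c mod ?b < ?b"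
      by (auto simp: less_mult_imp_div_less)
    then show "kron A B $$ (r, c) = cnj (kron A B $$ (c, r))"
      using rc sq hermitianD[OF assms(1), of "r div ?b" "c div ?b"]
        hermitianD[OF assms(2), of "r mod ?b" "c mod ?b"]
      by (simp add: kron_def)
  qed (simp add: kron_def sq)
qed

lemma hermitian_product_mixture:
  assumes ens: "product_ensemble m n K p A B" shows "hermitian (product_mixture m n K p A B)"
  unfolding hermitian_def
proof (intro conjI allI impI)
  fix r c assume "r < dim_row (product_mixture m n K p A B)" "c < dim_row (product_mixture m n K p A B)"
  then have rc: "r < m * n" "c < m * n" by simp_all
  have "kron (A k) (B k) $$ (r, c) = cnj (kron (A k) (B k) $$ (c, r))" if "k < K" for k
  proof -
    have "hermitian (kron (A k) (B k))" "kron (A k) (B k) \<in> carrier_mat (m * n) (m * n)"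
      using ens that unfolding product_ensemble_def is_state_def psd_def
      by (auto intro: hermitian_kron kron_carrier_mat)
    with rc show ?thesis using hermitianD by (metis carrier_matD(1))
  qed
  with rc show "product_mixture m n K p A B $$ (r, c) = cnj (product_mixture m n K p A B $$ (c, r))"
    by (simp add: product_mixture_def cnj_sum)
qed simp

lemma sum_lessThan_add:
  fixes f :: "nat \<Rightarrow> 'a::comm_monoid_add"
  shows "(\<Sum>k<a + b. f k) = (\<Sum>k<a. f k) + (\<Sum>k<b. f (a + k))"
  by (induct b) (simp_all add: add.assoc)

lemma sum_lessThan_mult_div_mod:
  fixes f :: "nat \<Rightarrow> nat \<Rightarrow> 'a::comm_monoid_add"
  shows "(\<Sum>r<m * n. f (r div n) (r mod n)) = (\<Sum>i<m. \<Sum>j<n. f i j)"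
proof (induct m)
  case (Suc m)
  have "(\<Sum>r<Suc m * n. f (r div n) (r mod n)) =
      (\<Sum>r<m * n. f (r div n) (r mod n)) + (\<Sum>j<n. f ((m * n + j) div n) ((m * n + j) mod n))"
    using sum_lessThan_add[of "\<lambda>r. f (r div n) (r mod n)" "m * n" n] by (simp add: add.commute)
  also have "(\<Sum>j<n. f ((m * n + j) div n) ((m * n + j) mod n)) = (\<Sum>j<n. f m j)"
    by (intro sum.cong) auto
  finally show ?case using Suc by simp
qed simp

lemma trace_mat_kron:
  assumes "A \<in> carrier_mat m m" "B \<in> carrier_mat n n"
  shows "trace_mat (kron A B) = trace_mat A * trace_mat B"
proof -
  have "trace_mat (kron A B) = (\<Sum>r<m * n. A $$ (r div n, r div n) * B $$ (r mod n, r mod n))"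
    using assms unfolding trace_mat_def kron_def by simp
  also have "\<dots> = (\<Sum>i<m. \<Sum>j<n. A $$ (i, i) * B $$ (j, j))"
    by (rule sum_lessThan_mult_div_mod)
  also have "\<dots> = trace_mat A * trace_mat B"
    using assms unfolding trace_mat_def by (simp add: sum_product)
  finally show ?thesis .
qed

lemma trace_product_mixture:
  assumes ens: "product_ensemble m n K p A B" shows "trace_mat (product_mixture m n K p A B) = 1"
proof -
  have "trace_mat (product_mixture m n K p A B) =
      (\<Sum>k<K. \<Sum>r<m * n. complex_of_real (p k) * kron (A k) (B k) $$ (r, r))"
    unfolding trace_mat_def product_mixture_def by (simp add: sum.swap[of _ "{..<K}"])
  also have "\<dots> = (\<Sum>k<K. complex_of_real (p k))"
  proof (intro sum.cong refl)
    fix k assume "k \<in> {..<K}"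
    then have "is_state m (A k)" "is_state n (B k)" using ens unfolding product_ensemble_def by auto
    then have "trace_mat (kron (A k) (B k)) = 1" "kron (A k) (B k) \<in> carrier_mat (m * n) (m * n)"
      unfolding is_state_def by (auto simp: trace_mat_kron kron_carrier_mat)
    then show "(\<Sum>r<m * n. complex_of_real (p k) * kron (A k) (B k) $$ (r, r)) = complex_of_real (p k)"
      unfolding trace_mat_def by (simp flip: sum_distrib_left)
  qed
  also have "\<dots> = 1" using ens unfolding product_ensemble_def by (metis of_real_1 of_real_sum)
  finally show ?thesis .
qed

lemma separable_hermitian: "separable m n \<sigma> \<Longrightarrow> hermitian \<sigma>"
  by (metis separableE hermitian_product_mixture)

lemma separable_trace: "separable m n \<sigma> \<Longrightarrow> trace_mat \<sigma> = 1"
  by (metis separableE trace_product_mixture)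

lemma separable_convex_comb:
  assumes "separable m n \<sigma>\<^sub>1" "separable m n \<sigma>\<^sub>2" "0 \<le> t" "t \<le> 1"
  shows "separable m n (complex_of_real (1 - t) \<cdot>\<^sub>m \<sigma>\<^sub>1 + complex_of_real t \<cdot>\<^sub>m \<sigma>\<^sub>2)"
proof -
  obtain K\<^sub>1 p\<^sub>1 A\<^sub>1 B\<^sub>1 where ens1: "product_ensemble m n K\<^sub>1 p\<^sub>1 A\<^sub>1 B\<^sub>1"
    and \<sigma>\<^sub>1: "\<sigma>\<^sub>1 = product_mixture m n K\<^sub>1 p\<^sub>1 A\<^sub>1 B\<^sub>1"
    using assms(1) by (rule separableE)
  obtain K\<^sub>2 p\<^sub>2 A\<^sub>2 B\<^sub>2 where ens2: "product_ensemble m n K\<^sub>2 p\<^sub>2 A\<^sub>2 B\<^sub>2"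
    and \<sigma>\<^sub>2: "\<sigma>\<^sub>2 = product_mixture m n K\<^sub>2 p\<^sub>2 A\<^sub>2 B\<^sub>2"
    using assms(2) by (rule separableE)
  define p where "p k = (if k < K\<^sub>1 then (1 - t) * p\<^sub>1 k else t * p\<^sub>2 (k - K\<^sub>1))" for k
  define A where "A k = (if k < K\<^sub>1 then A\<^sub>1 k else A\<^sub>2 (k - K\<^sub>1))" for k
  define B where "B k = (if k < K\<^sub>1 then B\<^sub>1 k else B\<^sub>2 (k - K\<^sub>1))" for k
  have "product_ensemble m n (K\<^sub>1 + K\<^sub>2) p A B"
    using ens1 ens2 assms(3,4)
    by (auto simp: product_ensemble_def p_def A_def B_def sum_lessThan_add
        simp flip: sum_distrib_left)
  moreover have "complex_of_real (1 - t) \<cdot>\<^sub>m \<sigma>\<^sub>1 + complex_of_real t \<cdot>\<^sub>m \<sigma>\<^sub>2 =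
      product_mixture m n (K\<^sub>1 + K\<^sub>2) p A B"
    unfolding \<sigma>\<^sub>1 \<sigma>\<^sub>2
    by (intro eq_matI)
      (simp_all add: product_mixture_def p_def A_def B_def sum_lessThan_add sum_distrib_left mult.assoc)
  ultimately show ?thesis unfolding separable_iff_product_mixture by blast
qed

subsection \<open>Caratheodory's theorem\<close>

lemma nontrivial_linear_relation_extend:
  fixes w :: "'i \<Rightarrow> 'j \<Rightarrow> real"
  assumes fin: "finite I" and k0: "k0 \<in> I" "w k0 j0 \<noteq> 0"
    and c': "\<exists>k\<in>I - {k0}. c' k \<noteq> 0"
      "\<forall>j\<in>J. (\<Sum>k\<in>I - {k0}. c' k * (w k j - w k j0 / w k0 j0 * w k0 j)) = 0"
  shows "\<exists>c. (\<exists>k\<in>I. c k \<noteq> 0) \<and> (\<forall>j\<in>insert j0 J. (\<Sum>k\<in>I. c k * w k j) = 0)"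
proof -
  define a where "a = w k0 j0"
  define S where "S = (\<Sum>k\<in>I - {k0}. c' k * w k j0)"
  define c where "c k = (if k = k0 then - S / a else c' k)" for k
  have sum_c: "(\<Sum>k\<in>I. c k * w k j) = - S / a * w k0 j + (\<Sum>k\<in>I - {k0}. c' k * w k j)" for j
  proof -
    have "(\<Sum>k\<in>I. c k * w k j) = c k0 * w k0 j + (\<Sum>k\<in>I - {k0}. c k * w k j)"
      by (rule sum.remove[OF fin k0(1)])
    also have "(\<Sum>k\<in>I - {k0}. c k * w k j) = (\<Sum>k\<in>I - {k0}. c' k * w k j)"
      by (intro sum.cong) (auto simp: c_def)
    finally show ?thesis by (simp add: c_def)
  qed
  have "(\<Sum>k\<in>I. c k * w k j0) = 0" using sum_c[of j0] k0 by (simp add: S_def a_def)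
  moreover have "(\<Sum>k\<in>I. c k * w k j) = 0" if "j \<in> J" for j
  proof -
    have "0 = (\<Sum>k\<in>I - {k0}. c' k * (w k j - w k j0 / a * w k0 j))" using c'(2) that by (simp add: a_def)
    also have "\<dots> = (\<Sum>k\<in>I - {k0}. c' k * w k j) - S / a * w k0 j"
      by (simp add: S_def right_diff_distrib sum_subtractf sum_distrib_right sum_divide_distrib mult.assoc)
    finally show ?thesis using sum_c[of j] by simp
  qed
  moreover have "\<exists>k\<in>I. c k \<noteq> 0" using c'(1) by (auto simp: c_def)
  ultimately show ?thesis by blast
qed

lemma exists_nontrivial_linear_relation:
  fixes w :: "'i \<Rightarrow> 'j \<Rightarrow> real"
  assumes "finite J" "finite I" "card J < card I"
  shows "\<exists>c. (\<exists>k\<in>I. c k \<noteq> 0) \<and> (\<forall>j\<in>J. (\<Sum>k\<in>I. c k * w k j) = 0)"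
  using assms
proof (induct J arbitrary: I w rule: finite_induct)
  case empty
  then have "I \<noteq> {}" by auto
  then show ?case by (intro exI[of _ "\<lambda>_. 1"]) auto
next
  case (insert j0 J)
  show ?case
  proof (cases "\<forall>k\<in>I. w k j0 = 0")
    case True
    have "card J < card I" using insert by simp
    from insert(3)[OF insert(4) this, of w] obtain c where
      "\<exists>k\<in>I. c k \<noteq> 0" "\<forall>j\<in>J. (\<Sum>k\<in>I. c k * w k j) = 0" by blast
    with True show ?thesis by (intro exI[of _ c]) auto
  next
    case False
    then obtain k0 where k0: "k0 \<in> I" "w k0 j0 \<noteq> 0" by blast
    have "card J < card (I - {k0})" using insert(1,2,4,5) k0(1) by (simp add: card_Diff_singleton)
    from insert(3)[OF _ this, of "\<lambda>k j. w k j - w k j0 / w k0 j0 * w k0 j"] insert(4)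
    obtain c' where "\<exists>k\<in>I - {k0}. c' k \<noteq> 0"
      "\<forall>j\<in>J. (\<Sum>k\<in>I - {k0}. c' k * (w k j - w k j0 / w k0 j0 * w k0 j)) = 0" by auto
    then show ?thesis using nontrivial_linear_relation_extend[of I k0 w j0 _ J] insert(4) k0 by blast
  qed
qed

lemma exists_affine_dependence:
  fixes v :: "'i \<Rightarrow> 'j \<Rightarrow> real"
  assumes fI: "finite I" and fJ: "finite J" and card: "card J + 1 < card I"
  obtains c where "\<exists>k\<in>I. 0 < c k" "(\<Sum>k\<in>I. c k) = 0" "\<And>j. j \<in> J \<Longrightarrow> (\<Sum>k\<in>I. c k * v k j) = 0"
proof -
  define w where "w k = (\<lambda>jj. case jj of None \<Rightarrow> 1 | Some j \<Rightarrow> v k j)" for k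
  have "card (insert None (Some ` J)) = card J + 1" using fJ by (simp add: card_image)
  then obtain c where c: "\<exists>k\<in>I. c k \<noteq> 0" "\<forall>jj\<in>insert None (Some ` J). (\<Sum>k\<in>I. c k * w k jj) = 0"
    using exists_nontrivial_linear_relation[of "insert None (Some ` J)" I w] fI fJ card by auto
  have csum: "(\<Sum>k\<in>I. c k) = 0" using c(2) by (auto simp: w_def)
  have "\<exists>k\<in>I. 0 < c k"
  proof (rule ccontr)
    assume "\<not> ?thesis"
    then have "\<forall>k\<in>I. - c k = 0"
      using sum_nonneg_eq_0_iff[OF fI, of "\<lambda>k. - c k"] csum by (simp add: sum_negf not_less)
    then show False using c(1) by auto
  qed
  with csum c(2) show ?thesis using that by (auto simp: w_def)
qed

lemma convex_combination_remove_point: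
  fixes v :: "'i \<Rightarrow> 'j \<Rightarrow> real"
  assumes fI: "finite I" and fJ: "finite J" and card: "card J + 1 < card I"
    and p0: "\<forall>k\<in>I. 0 \<le> p k" and p1: "sum p I = 1"
  shows "\<exists>k0\<in>I. \<exists>p'. (\<forall>k\<in>I - {k0}. 0 \<le> p' k) \<and> sum p' (I - {k0}) = 1 \<and>
      (\<forall>j\<in>J. (\<Sum>k\<in>I - {k0}. p' k * v k j) = (\<Sum>k\<in>I. p k * v k j))"
proof -
  obtain c where c_pos: "\<exists>k\<in>I. 0 < c k" and csum: "(\<Sum>k\<in>I. c k) = 0"
    and cv: "\<And>j. j \<in> J \<Longrightarrow> (\<Sum>k\<in>I. c k * v k j) = 0"
    using exists_affine_dependence[OF fI fJ card] by blast
  define P where "P = {k\<in>I. 0 < c k}"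
  have fP: "finite P" "P \<noteq> {}" using fI c_pos by (auto simp: P_def)
  define t where "t = Min ((\<lambda>k. p k / c k) ` P)"
  have "t \<in> (\<lambda>k. p k / c k) ` P" unfolding t_def using fP by (intro Min_in) auto
  then obtain k0 where k0: "k0 \<in> P" "t = p k0 / c k0" by auto
  have t0: "0 \<le> t" using k0 p0 by (auto simp: P_def)
  define p' where "p' k = p k - t * c k" for k
  have p'0: "0 \<le> p' k" if "k \<in> I" for k
  proof (cases "0 < c k")
    case True
    then have "t \<le> p k / c k" unfolding t_def using fP that by (intro Min_le) (auto simp: P_def)
    with True show ?thesis by (simp add: p'_def pos_le_divide_eq)
  next
    case False
    with t0 have "t * c k \<le> 0" by (simp add: mult_nonneg_nonpos)
    moreover have "0 \<le> p k" using p0 that by blast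
    ultimately show ?thesis by (simp add: p'_def)
  qed
  have pk0: "p' k0 = 0" and k0I: "k0 \<in> I" using k0 by (simp_all add: p'_def P_def)
  have "sum p' I = 1" using p1 csum by (simp add: p'_def sum_subtractf flip: sum_distrib_left)
  then have "sum p' (I - {k0}) = 1" using sum.remove[OF fI k0I, of p'] pk0 by simp
  moreover have "(\<Sum>k\<in>I - {k0}. p' k * v k j) = (\<Sum>k\<in>I. p k * v k j)" if "j \<in> J" for j
  proof -
    have "(\<Sum>k\<in>I. p' k * v k j) = (\<Sum>k\<in>I. p k * v k j) - t * (\<Sum>k\<in>I. c k * v k j)"
      by (simp add: p'_def left_diff_distrib sum_subtractf sum_distrib_left mult.assoc)
    then show ?thesis using cv[OF that] sum.remove[OF fI k0I, of "\<lambda>k. p' k * v k j"] pk0 by simp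
  qed
  ultimately show ?thesis using k0I p'0 by blast
qed

lemma convex_combination_card_le:
  fixes v :: "'i \<Rightarrow> 'j \<Rightarrow> real"
  assumes "finite I" "finite J" "\<forall>k\<in>I. 0 \<le> p k" "sum p I = 1"
  shows "\<exists>I' p'. I' \<subseteq> I \<and> card I' \<le> card J + 1 \<and> (\<forall>k\<in>I'. 0 \<le> p' k) \<and> sum p' I' = 1 \<and>
      (\<forall>j\<in>J. (\<Sum>k\<in>I'. p' k * v k j) = (\<Sum>k\<in>I. p k * v k j))"
  using assms
proof (induct "card I" arbitrary: I p rule: less_induct)
  case less
  show ?case
  proof (cases "card I \<le> card J + 1")
    case True
    then show ?thesis using less.prems by (intro exI[of _ I] exI[of _ p]) auto
  next
    case False
    then obtain k0 p' where k0: "k0 \<in> I" and p': "\<forall>k\<in>I - {k0}. 0 \<le> p' k" "sum p' (I - {k0}) = 1"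
      "\<forall>j\<in>J. (\<Sum>k\<in>I - {k0}. p' k * v k j) = (\<Sum>k\<in>I. p k * v k j)"
      using convex_combination_remove_point[of I J p v] less.prems by auto
    have "card (I - {k0}) < card I" using k0 less.prems(1) by (rule card_Diff1_less[rotated])
    from less.hyps[OF this _ less.prems(2) p'(1,2)] less.prems(1) obtain I' p'' where
      "I' \<subseteq> I - {k0}" "card I' \<le> card J + 1" "\<forall>k\<in>I'. 0 \<le> p'' k" "sum p'' I' = 1"
      "\<forall>j\<in>J. (\<Sum>k\<in>I'. p'' k * v k j) = (\<Sum>k\<in>I - {k0}. p' k * v k j)" by auto
    then show ?thesis using p'(3) by (intro exI[of _ I'] exI[of _ p'']) auto
  qed
qed

lemma product_mixture_reindex:
  fixes w :: "'i \<Rightarrow> real"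
  assumes fin: "finite I" and "card I \<le> L"
    and ens: "\<forall>k\<in>I. 0 \<le> w k \<and> is_state m (A k) \<and> is_state n (B k)" and w1: "sum w I = 1"
  obtains p' A' B' where "product_ensemble m n L p' A' B'"
    "\<And>r c. r < m * n \<Longrightarrow> c < m * n \<Longrightarrow>
      product_mixture m n L p' A' B' $$ (r, c) = (\<Sum>i\<in>I. complex_of_real (w i) * kron (A i) (B i) $$ (r, c))"
proof -
  define q where "q = card I"
  obtain h where h: "bij_betw h {..<q} I"
    using ex_bij_betw_nat_finite[OF fin] unfolding q_def atLeast0LessThan by blast
  have hI: "h k \<in> I" if "k < q" for k using h that by (auto simp: bij_betw_def)
  have "0 < q" using w1 fin by (cases "I = {}") (auto simp: q_def)
  have reindex: "(\<Sum>k<L. if k < q then g (h k) else 0) = (\<Sum>i\<in>I. g i)"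
    for g :: "'i \<Rightarrow> 'z::comm_monoid_add"
  proof -
    have "(\<Sum>k<L. if k < q then g (h k) else 0) = (\<Sum>k<q. g (h k))"
      using \<open>card I \<le> L\<close> by (intro sum.mono_neutral_cong_right) (auto simp: q_def)
    also have "\<dots> = (\<Sum>i\<in>I. g i)" by (rule sum.reindex_bij_betw[OF h])
    finally show ?thesis .
  qed
  define p' where "p' k = (if k < q then w (h k) else 0)" for k
  define A' where "A' k = A (h (if k < q then k else 0))" for k
  define B' where "B' k = B (h (if k < q then k else 0))" for k
  have "product_ensemble m n L p' A' B'"
    unfolding product_ensemble_def
  proof (intro conjI allI impI)
    fix k
    show "0 \<le> p' k" "is_state m (A' k)" "is_state n (B' k)"
      using ens hI \<open>0 < q\<close> unfolding p'_def A'_def B'_def by auto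
  next
    show "(\<Sum>k<L. p' k) = 1" unfolding p'_def reindex by (rule w1)
  qed
  moreover have "product_mixture m n L p' A' B' $$ (r, c) =
      (\<Sum>i\<in>I. complex_of_real (w i) * kron (A i) (B i) $$ (r, c))" if "r < m * n" "c < m * n" for r c
  proof -
    have "product_mixture m n L p' A' B' $$ (r, c) = (\<Sum>k<L. if k < q
        then complex_of_real (w (h k)) * kron (A (h k)) (B (h k)) $$ (r, c) else 0)"
      using that by (auto simp: product_mixture_def p'_def A'_def B'_def intro!: sum.cong)
    then show ?thesis using reindex[of "\<lambda>i. complex_of_real (w i) * kron (A i) (B i) $$ (r, c)"] by simp
  qed
  ultimately show ?thesis using that by blast
qed

text \<open>The real dimension of the space of \<open>mn \<times> mn\<close> complex matrices, plus one.\<close>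

definition caratheodory_bound :: "nat \<Rightarrow> nat \<Rightarrow> nat" where
  "caratheodory_bound m n = 2 * (m * n)\<^sup>2 + 1"

lemma product_mixture_caratheodory:
  assumes ens: "product_ensemble m n K p A B"
  obtains p' A' B' where "product_ensemble m n (caratheodory_bound m n) p' A' B'"
    "product_mixture m n (caratheodory_bound m n) p' A' B' = product_mixture m n K p A B"
proof -
  define J where "J = {..<m * n} \<times> {..<m * n} \<times> (UNIV :: bool set)"
  define coord where
    "coord k = (\<lambda>(r, c, b). (if b then Re else Im) (kron (A k) (B k) $$ (r, c)))" for k
  have p0: "\<forall>k\<in>{..<K}. 0 \<le> p k" and p1: "sum p {..<K} = 1"
    using ens unfolding product_ensemble_def by auto
  obtain I w where I: "I \<subseteq> {..<K}" "card I \<le> card J + 1" "\<forall>k\<in>I. 0 \<le> w k" "sum w I = 1"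
    and same: "\<forall>jb\<in>J. (\<Sum>k\<in>I. w k * coord k jb) = (\<Sum>k\<in>{..<K}. p k * coord k jb)"
    using convex_combination_card_le[OF _ _ p0 p1, of J coord] by (auto simp: J_def)
  have "card J + 1 = caratheodory_bound m n"
    by (simp add: caratheodory_bound_def J_def card_cartesian_product power2_eq_square)
  with I(2) have card_I: "card I \<le> caratheodory_bound m n" by simp
  have "finite I" using I(1) finite_subset by blast
  have ens_I: "\<forall>k\<in>I. 0 \<le> w k \<and> is_state m (A k) \<and> is_state n (B k)"
    using I(1,3) ens unfolding product_ensemble_def by auto
  obtain p' A' B' where ens': "product_ensemble m n (caratheodory_bound m n) p' A' B'"
    and mix: "\<And>r c. r < m * n \<Longrightarrow> c < m * n \<Longrightarrow>
      product_mixture m n (caratheodory_bound m n) p' A' B' $$ (r, c) =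
      (\<Sum>i\<in>I. complex_of_real (w i) * kron (A i) (B i) $$ (r, c))"
    using \<open>finite I\<close> card_I ens_I I(4) by (rule product_mixture_reindex) blast
  have "product_mixture m n (caratheodory_bound m n) p' A' B' = product_mixture m n K p A B"
  proof (intro eq_matI)
    fix r c assume "r < dim_row (product_mixture m n K p A B)" "c < dim_col (product_mixture m n K p A B)"
    then have "r < m * n" "c < m * n" "(r, c, True) \<in> J" "(r, c, False) \<in> J" by (simp_all add: J_def)
    then show "product_mixture m n (caratheodory_bound m n) p' A' B' $$ (r, c) =
        product_mixture m n K p A B $$ (r, c)"
      using mix same[rule_format, of "(r, c, True)"] same[rule_format, of "(r, c, False)"]
      by (simp add: product_mixture_def complex_eq_iff Re_sum Im_sum coord_def)
  qed simp_all
  with ens' show ?thesis using that by blast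
qed

subsection \<open>Compactness of the set of separable states\<close>

lemma sum_lessThan_eq_single:
  fixes f :: "nat \<Rightarrow> 'a::comm_monoid_add"
  assumes "i < d" "\<And>k. k < d \<Longrightarrow> k \<noteq> i \<Longrightarrow> f k = 0"
  shows "(\<Sum>k<d. f k) = f i"
  using assms sum.mono_neutral_right[of "{..<d}" "{i}" f] by auto

lemma sum_lessThan_eq_pair:
  fixes f :: "nat \<Rightarrow> 'a::comm_monoid_add"
  assumes "i < d" "j < d" "i \<noteq> j" "\<And>k. k < d \<Longrightarrow> k \<noteq> i \<Longrightarrow> k \<noteq> j \<Longrightarrow> f k = 0"
  shows "(\<Sum>k<d. f k) = f i + f j"
  using assms sum.mono_neutral_right[of "{..<d}" "{i, j}" f] by auto

lemma quad_form_unit_vec: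
  assumes "A \<in> carrier_mat d d" "i < d"
  shows "quad_form A (unit_vec d i) = A $$ (i, i)"
proof -
  have "(\<Sum>b<d. cnj (unit_vec d i $ a) * A $$ (a, b) * unit_vec d i $ b) =
      cnj (unit_vec d i $ a) * A $$ (a, i)" if "a < d" for a
    using assms that by (subst sum_lessThan_eq_single[of i]) auto
  then show ?thesis
    using assms by (simp add: quad_form_def sum_lessThan_eq_single[of i])
qed

lemma quad_form_two_entries:
  fixes u :: complex
  assumes "A \<in> carrier_mat d d" "i < d" "j < d" "i \<noteq> j"
  defines "v \<equiv> vec d (\<lambda>k. if k = i then 1 else if k = j then u else 0)"
  shows "quad_form A v = A $$ (i, i) + A $$ (i, j) * u + cnj u * A $$ (j, i) + cnj u * A $$ (j, j) * u"
proof -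
  have "(\<Sum>b<d. cnj (v $ a) * A $$ (a, b) * v $ b) =
      cnj (v $ a) * A $$ (a, i) + cnj (v $ a) * A $$ (a, j) * u" if "a < d" for a
    using assms that by (subst sum_lessThan_eq_pair[of i d j]) auto
  then have "quad_form A v = (\<Sum>a<d. cnj (v $ a) * A $$ (a, i) + cnj (v $ a) * A $$ (a, j) * u)"
    using assms(1) by (simp add: quad_form_def)
  also have "\<dots> = A $$ (i, i) + A $$ (i, j) * u + (cnj u * A $$ (j, i) + cnj u * A $$ (j, j) * u)"
    using assms by (subst sum_lessThan_eq_pair[of i d j]) auto
  finally show ?thesis by (simp add: algebra_simps)
qed

lemma is_state_quad_form_nonneg:
  "is_state d A \<Longrightarrow> v \<in> carrier_vec d \<Longrightarrow> 0 \<le> Re (quad_form A v)"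
  unfolding is_state_def psd_iff_quad_form by auto

lemma is_state_diag:
  assumes "is_state d A" "i < d"
  shows "Im (A $$ (i, i)) = 0" "0 \<le> Re (A $$ (i, i))" "Re (A $$ (i, i)) \<le> 1"
proof -
  have carr: "A \<in> carrier_mat d d" and herm: "hermitian A" and tr: "trace_mat A = 1"
    using assms(1) unfolding is_state_def psd_def by auto
  have "A $$ (i, i) = cnj (A $$ (i, i))" using hermitianD[OF herm, of i i] carr assms(2) by simp
  then show "Im (A $$ (i, i)) = 0" by (metis cnj.sel(2) equation_minus_iff neg_equal_zero)
  have diag_nonneg: "0 \<le> Re (A $$ (k, k))" if "k < d" for k
    using is_state_quad_form_nonneg[OF assms(1), of "unit_vec d k"] quad_form_unit_vec[OF carr that]
    by simp
  then show "0 \<le> Re (A $$ (i, i))" using assms(2) .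
  have "Re (A $$ (i, i)) \<le> (\<Sum>k<d. Re (A $$ (k, k)))"
    using assms(2) diag_nonneg by (intro member_le_sum) auto
  also have "\<dots> = 1" using tr carr unfolding trace_mat_def by (simp flip: Re_sum)
  finally show "Re (A $$ (i, i)) \<le> 1" .
qed

text \<open>Testing positivity on \<open>e\<^sub>i + u e\<^sub>j\<close> for \<open>u = \<plusminus>1, \<plusminus>\<i>\<close> bounds the real and imaginary
  parts of \<open>A\<^sub>i\<^sub>j\<close> by the diagonal.\<close>

lemma is_state_entry_bound:
  assumes "is_state d A" "i < d" "j < d"
  shows "cmod (A $$ (i, j)) \<le> 2"
proof (cases "i = j")
  case True
  then show ?thesis using is_state_diag[OF assms(1,2)] by (simp add: cmod_def)
next
  case False
  have carr: "A \<in> carrier_mat d d" using assms unfolding is_state_def by auto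
  have herm: "A $$ (j, i) = cnj (A $$ (i, j))"
    using hermitianD[of A j i] assms carr unfolding is_state_def psd_def by simp
  have probe: "0 \<le> Re (A $$ (i, i) + A $$ (i, j) * u + cnj u * A $$ (j, i) + cnj u * A $$ (j, j) * u)" for u
    using is_state_quad_form_nonneg[OF assms(1)] quad_form_two_entries[OF carr assms(2,3) False, of u]
    by (metis (no_types, lifting) dim_vec carrier_vecI)
  have "0 \<le> Re (A $$ (i, i)) + Re (A $$ (j, j)) + 2 * Re (A $$ (i, j))"
    "0 \<le> Re (A $$ (i, i)) + Re (A $$ (j, j)) - 2 * Re (A $$ (i, j))"
    "0 \<le> Re (A $$ (i, i)) + Re (A $$ (j, j)) - 2 * Im (A $$ (i, j))"
    "0 \<le> Re (A $$ (i, i)) + Re (A $$ (j, j)) + 2 * Im (A $$ (i, j))"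
    using probe[of 1] probe[of "-1"] probe[of "\<i>"] probe[of "-\<i>"] herm by simp_all
  then have "\<bar>Re (A $$ (i, j))\<bar> \<le> 1" "\<bar>Im (A $$ (i, j))\<bar> \<le> 1"
    using is_state_diag[OF assms(1,2)] is_state_diag[OF assms(1,3)] by auto
  then show ?thesis using cmod_le[of "A $$ (i, j)"] by linarith
qed

lemma is_state_limit:
  assumes states: "\<And>N. is_state d (S N)" and L: "L \<in> carrier_mat d d"
    and lim: "\<And>i j. i < d \<Longrightarrow> j < d \<Longrightarrow> (\<lambda>N. S N $$ (i, j)) \<longlonglongrightarrow> L $$ (i, j)"
  shows "is_state d L"
proof -
  have carr: "S N \<in> carrier_mat d d" for N using states unfolding is_state_def by blast
  then have dims: "dim_row (S N) = d" for N by blast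
  have "hermitian L"
    unfolding hermitian_def
  proof (intro conjI allI impI)
    fix i j assume "i < dim_row L" "j < dim_row L"
    then have ij: "i < d" "j < d" using L by auto
    have "S N $$ (i, j) = cnj (S N $$ (j, i))" for N
      using hermitianD[of "S N" i j] states[of N] carr[of N] ij unfolding is_state_def psd_def by simp
    then have "(\<lambda>N. S N $$ (i, j)) \<longlonglongrightarrow> cnj (L $$ (j, i))"
      using tendsto_cnj[OF lim[OF ij(2,1)]] by simp
    then show "L $$ (i, j) = cnj (L $$ (j, i))" using lim[OF ij] LIMSEQ_unique by blast
  qed (use L in simp)
  moreover have "0 \<le> Re (quad_form L v)" if "v \<in> carrier_vec d" for v
  proof (rule LIMSEQ_le_const)
    have "(\<lambda>N. Re (\<Sum>i<d. \<Sum>j<d. cnj (v $ i) * S N $$ (i, j) * v $ j)) \<longlonglongrightarrow>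
        Re (\<Sum>i<d. \<Sum>j<d. cnj (v $ i) * L $$ (i, j) * v $ j)"
      by (intro tendsto_intros lim) auto
    then show "(\<lambda>N. Re (quad_form (S N) v)) \<longlonglongrightarrow> Re (quad_form L v)"
      using L by (simp add: quad_form_def dims)
    show "\<exists>N0. \<forall>N\<ge>N0. 0 \<le> Re (quad_form (S N) v)"
      using is_state_quad_form_nonneg[OF states that] by blast
  qed
  moreover have "trace_mat L = 1"
  proof -
    have "(\<lambda>N. \<Sum>i<d. S N $$ (i, i)) \<longlonglongrightarrow> (\<Sum>i<d. L $$ (i, i))" by (intro tendsto_intros lim) auto
    moreover have "(\<Sum>i<d. S N $$ (i, i)) = 1" for N
      using states[of N] carr[of N] unfolding is_state_def trace_mat_def by simp
    ultimately have "(\<lambda>N. 1) \<longlonglongrightarrow> (\<Sum>i<d. L $$ (i, i))" by simp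
    then have "1 = (\<Sum>i<d. L $$ (i, i))" by (simp only: LIMSEQ_const_iff)
    then show ?thesis using L unfolding trace_mat_def by simp
  qed
  ultimately show ?thesis using L unfolding is_state_def psd_iff_quad_form by auto
qed

definition basis_state :: "nat \<Rightarrow> complex mat" where
  "basis_state d = mat d d (\<lambda>(i, j). if i = 0 \<and> j = 0 then 1 else 0)"

lemma is_state_basis_state:
  assumes "0 < d" shows "is_state d (basis_state d)"
proof -
  have "quad_form (basis_state d) v = cnj (v $ 0) * v $ 0" for v
  proof -
    have "quad_form (basis_state d) v = (\<Sum>i<d. \<Sum>j<d. if i = 0 \<and> j = 0 then cnj (v $ i) * v $ j else 0)"
      unfolding quad_form_def basis_state_def by (intro sum.cong) auto
    also have "\<dots> = cnj (v $ 0) * v $ 0"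
      using assms by (simp add: sum_lessThan_eq_single[of 0])
    finally show ?thesis .
  qed
  moreover have "hermitian (basis_state d)" unfolding hermitian_def basis_state_def by auto
  moreover have "trace_mat (basis_state d) = 1"
    using assms unfolding trace_mat_def basis_state_def by (simp add: sum_lessThan_eq_single[of 0])
  ultimately show ?thesis
    unfolding is_state_def psd_iff_quad_form by (simp add: basis_state_def)
qed

lemma bounded_family_convergent_subseq:
  fixes X :: "nat \<Rightarrow> 'j \<Rightarrow> real"
  assumes "finite J" "\<And>j N. j \<in> J \<Longrightarrow> \<bar>X N j\<bar> \<le> M"
  shows "\<exists>r L. strict_mono r \<and> (\<forall>j\<in>J. (\<lambda>N. X (r N) j) \<longlonglongrightarrow> L j)"
  using assms
proof (induct J rule: finite_induct)
  case empty
  show ?case by (intro exI[of _ id]) (auto simp: strict_mono_def)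
next
  case (insert j0 J)
  then obtain r L where r: "strict_mono r" "\<forall>j\<in>J. (\<lambda>N. X (r N) j) \<longlonglongrightarrow> L j" by auto
  obtain f where f: "strict_mono f" "monoseq (\<lambda>N. X (r (f N)) j0)"
    using seq_monosub[of "\<lambda>N. X (r N) j0"] by (auto simp: o_def)
  have "Bseq (\<lambda>N. X (r (f N)) j0)" using insert(4) by (intro BseqI'[of _ M]) auto
  then obtain l where l: "(\<lambda>N. X (r (f N)) j0) \<longlonglongrightarrow> l"
    using f(2) Bseq_monoseq_convergent convergent_def by blast
  have "(\<lambda>N. X (r (f N)) j) \<longlonglongrightarrow> (L(j0 := l)) j" if "j \<in> insert j0 J" for j
  proof (cases "j = j0")
    case False
    with that r(2) have "(\<lambda>N. X (r N) j) \<longlonglongrightarrow> L j" by blast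
    from LIMSEQ_subseq_LIMSEQ[OF this f(1)] False show ?thesis by (simp add: o_def)
  qed (use l in simp)
  moreover have "strict_mono (\<lambda>N. r (f N))" using r(1) f(1) by (simp add: strict_mono_def)
  ultimately show ?case by (intro exI[of _ "\<lambda>N. r (f N)"] exI[of _ "L(j0 := l)"]) auto
qed

lemma bounded_complex_family_convergent_subseq:
  fixes X :: "nat \<Rightarrow> 'j \<Rightarrow> complex"
  assumes "finite J" "\<And>j N. j \<in> J \<Longrightarrow> cmod (X N j) \<le> M"
  obtains r L where "strict_mono r" "\<And>j. j \<in> J \<Longrightarrow> (\<lambda>N. X (r N) j) \<longlonglongrightarrow> L j"
proof -
  define Y where "Y N = (\<lambda>(j, b). (if b then Re else Im) (X N j))" for N
  have "\<bar>Y N (j, b)\<bar> \<le> M" if "j \<in> J" for j b N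
    using assms(2)[OF that, of N] abs_Re_le_cmod[of "X N j"] abs_Im_le_cmod[of "X N j"]
    unfolding Y_def by (cases b) auto
  then obtain r L where r: "strict_mono r" "\<forall>jb\<in>J \<times> UNIV. (\<lambda>N. Y (r N) jb) \<longlonglongrightarrow> L jb"
    using bounded_family_convergent_subseq[of "J \<times> UNIV" Y M] assms(1) by auto
  have lim: "(\<lambda>N. X (r N) j) \<longlonglongrightarrow> Complex (L (j, True)) (L (j, False))" if "j \<in> J" for j
    using tendsto_Complex[of "\<lambda>N. Re (X (r N) j)" _ sequentially "\<lambda>N. Im (X (r N) j)"]
      bspec[OF r(2), of "(j, True)"] bspec[OF r(2), of "(j, False)"] that
    by (simp add: Y_def)
  show ?thesis using r(1) lim by (rule that)
qed

lemma product_ensemble_limit: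
  fixes p :: "nat \<Rightarrow> nat \<Rightarrow> real" and A B :: "nat \<Rightarrow> nat \<Rightarrow> complex mat"
  assumes ens: "\<And>N. product_ensemble m n K (p N) (A N) (B N)"
    and carr: "\<And>k. A' k \<in> carrier_mat m m" "\<And>k. B' k \<in> carrier_mat n n"
    and lim_p: "\<And>k. k < K \<Longrightarrow> (\<lambda>N. p N k) \<longlonglongrightarrow> q k"
    and lim_A: "\<And>k i j. k < K \<Longrightarrow> i < m \<Longrightarrow> j < m \<Longrightarrow> (\<lambda>N. A N k $$ (i, j)) \<longlonglongrightarrow> A' k $$ (i, j)"
    and lim_B: "\<And>k i j. k < K \<Longrightarrow> i < n \<Longrightarrow> j < n \<Longrightarrow> (\<lambda>N. B N k $$ (i, j)) \<longlonglongrightarrow> B' k $$ (i, j)"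
  shows "product_ensemble m n K q A' B'"
    and "\<And>i j. i < m * n \<Longrightarrow> j < m * n \<Longrightarrow>
      (\<lambda>N. product_mixture m n K (p N) (A N) (B N) $$ (i, j)) \<longlonglongrightarrow> product_mixture m n K q A' B' $$ (i, j)"
proof -
  show ens': "product_ensemble m n K q A' B'"
    unfolding product_ensemble_def
  proof (intro conjI allI impI)
    fix k assume k: "k < K"
    show "0 \<le> q k"
      using ens k by (intro LIMSEQ_le_const[OF lim_p[OF k]]) (auto simp: product_ensemble_def)
    have "is_state m (A N k)" "is_state n (B N k)" for N
      using ens k unfolding product_ensemble_def by blast+
    then show "is_state m (A' k)" "is_state n (B' k)"
      using is_state_limit[of m "\<lambda>N. A N k" "A' k"] is_state_limit[of n "\<lambda>N. B N k" "B' k"]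
        carr lim_A[OF k] lim_B[OF k] by simp_all
  next
    have "(\<lambda>N. \<Sum>k<K. p N k) \<longlonglongrightarrow> (\<Sum>k<K. q k)" by (intro tendsto_sum lim_p) auto
    moreover have "(\<Sum>k<K. p N k) = 1" for N using ens unfolding product_ensemble_def by blast
    ultimately have "(\<lambda>N. 1) \<longlonglongrightarrow> (\<Sum>k<K. q k)" by simp
    then show "(\<Sum>k<K. q k) = 1" by (simp only: LIMSEQ_const_iff)
  qed
  fix i j assume ij: "i < m * n" "j < m * n"
  then have "0 < n" by (cases n) auto
  with ij have "i div n < m" "j div n < m" "i mod n < n" "j mod n < n"
    by (auto simp: less_mult_imp_div_less)
  then have "(\<lambda>N. \<Sum>k<K. complex_of_real (p N k) *
        (A N k $$ (i div n, j div n) * B N k $$ (i mod n, j mod n)))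
      \<longlonglongrightarrow> (\<Sum>k<K. complex_of_real (q k) * (A' k $$ (i div n, j div n) * B' k $$ (i mod n, j mod n)))"
    by (intro tendsto_intros lim_p lim_A lim_B) auto
  then show "(\<lambda>N. product_mixture m n K (p N) (A N) (B N) $$ (i, j)) \<longlonglongrightarrow> product_mixture m n K q A' B' $$ (i, j)"
    using index_product_mixture[OF ens ij] index_product_mixture[OF ens' ij] by simp
qed

lemma product_ensemble_convergent_subseq:
  fixes p :: "nat \<Rightarrow> nat \<Rightarrow> real" and A B :: "nat \<Rightarrow> nat \<Rightarrow> complex mat"
  assumes ens: "\<And>N. product_ensemble m n K (p N) (A N) (B N)"
  obtains r q A' B' where "strict_mono r" "product_ensemble m n K q A' B'"
    "\<And>i j. i < m * n \<Longrightarrow> j < m * n \<Longrightarrow>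
       (\<lambda>N. product_mixture m n K (p (r N)) (A (r N)) (B (r N)) $$ (i, j))
         \<longlonglongrightarrow> product_mixture m n K q A' B' $$ (i, j)"
proof -
  define J :: "(nat \<times> nat \<times> nat \<times> nat) set" where
    "J = {0} \<times> {..<K} \<times> {0} \<times> {0} \<union> {1} \<times> {..<K} \<times> {..<m} \<times> {..<m} \<union>
      {2} \<times> {..<K} \<times> {..<n} \<times> {..<n}"
  define X where "X N = (\<lambda>(t :: nat, k, i, j).
      if t = 0 then complex_of_real (p N k) else if t = 1 then A N k $$ (i, j) else B N k $$ (i, j))"
    for N
  have "finite J" by (simp add: J_def)
  have bound: "cmod (X N c) \<le> 2" if cJ: "c \<in> J" for c N
  proof -
    obtain t k i j where c: "c = (t, k, i, j)" by (cases c)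
    have k: "k < K" using cJ c by (auto simp: J_def)
    then have states: "is_state m (A N k)" "is_state n (B N k)" and "0 \<le> p N k" "p N k \<le> 1"
      using ens[of N] product_ensemble_weight_le_1[OF ens[of N]] unfolding product_ensemble_def by auto
    consider "t = 0" | "t = 1" "i < m" "j < m" | "t = 2" "i < n" "j < n"
      using cJ c by (auto simp: J_def)
    then show ?thesis
    proof cases
      case 1
      with \<open>0 \<le> p N k\<close> \<open>p N k \<le> 1\<close> show ?thesis by (simp add: X_def c)
    next
      case 2
      with is_state_entry_bound[OF states(1)] show ?thesis by (simp add: X_def c)
    next
      case 3
      with is_state_entry_bound[OF states(2)] show ?thesis by (simp add: X_def c)
    qed
  qed
  obtain r L where r: "strict_mono r" and lim: "\<And>c. c \<in> J \<Longrightarrow> (\<lambda>N. X (r N) c) \<longlonglongrightarrow> L c"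
    using bounded_complex_family_convergent_subseq[of J X 2, OF \<open>finite J\<close> bound] by blast
  define q where "q k = Re (L (0, k, 0, 0))" for k
  define A' where "A' k = mat m m (\<lambda>(i, j). L (1, k, i, j))" for k
  define B' where "B' k = mat n n (\<lambda>(i, j). L (2, k, i, j))" for k
  have lim_p: "(\<lambda>N. p (r N) k) \<longlonglongrightarrow> q k" if "k < K" for k
    using tendsto_Re[OF lim[of "(0, k, 0, 0)"]] that by (simp add: X_def q_def J_def)
  have lim_A: "(\<lambda>N. A (r N) k $$ (i, j)) \<longlonglongrightarrow> A' k $$ (i, j)" if "k < K" "i < m" "j < m" for k i j
    using lim[of "(1, k, i, j)"] that by (simp add: X_def A'_def J_def)
  have lim_B: "(\<lambda>N. B (r N) k $$ (i, j)) \<longlonglongrightarrow> B' k $$ (i, j)" if "k < K" "i < n" "j < n" for k i j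
    using lim[of "(2, k, i, j)"] that by (simp add: X_def B'_def J_def)
  have "A' k \<in> carrier_mat m m" "B' k \<in> carrier_mat n n" for k by (simp_all add: A'_def B'_def)
  note limit = product_ensemble_limit[of m n K "\<lambda>N. p (r N)" "\<lambda>N. A (r N)" "\<lambda>N. B (r N)",
      OF ens this lim_p lim_A lim_B]
  from r limit show ?thesis by (rule that)
qed

subsection \<open>The nearest separable state\<close>

definition frob_inner :: "nat \<Rightarrow> complex mat \<Rightarrow> complex mat \<Rightarrow> real" where
  "frob_inner d A B = (\<Sum>i<d. \<Sum>j<d. Re (cnj (A $$ (i, j)) * B $$ (i, j)))"

lemma Re_cnj_mult_self: "Re (cnj z * z) = (cmod z)\<^sup>2"
  by (simp only: cmod_power2) (simp add: power2_eq_square)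

lemma frob_inner_self: "frob_inner d A A = (\<Sum>i<d. \<Sum>j<d. (cmod (A $$ (i, j)))\<^sup>2)"
  unfolding frob_inner_def Re_cnj_mult_self ..

lemma frob_inner_self_nonneg: "0 \<le> frob_inner d A A"
  unfolding frob_inner_self by (intro sum_nonneg) simp

lemma frob_inner_self_eq_0_imp_zero:
  assumes "A \<in> carrier_mat d d" "frob_inner d A A = 0" shows "A = 0\<^sub>m d d"
proof (intro eq_matI)
  fix i j assume "i < dim_row (0\<^sub>m d d :: complex mat)" "j < dim_col (0\<^sub>m d d :: complex mat)"
  then have ij: "i \<in> {..<d}" "j \<in> {..<d}" by simp_all
  have "\<forall>i\<in>{..<d}. (\<Sum>j<d. (cmod (A $$ (i, j)))\<^sup>2) = 0"
    using assms(2) unfolding frob_inner_self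
    by (subst sum_nonneg_eq_0_iff[symmetric]) (auto intro: sum_nonneg)
  with ij have "(cmod (A $$ (i, j)))\<^sup>2 = 0"
    using sum_nonneg_eq_0_iff[of "{..<d}" "\<lambda>j. (cmod (A $$ (i, j)))\<^sup>2"] by auto
  with ij show "A $$ (i, j) = 0\<^sub>m d d $$ (i, j)" by simp
qed (use assms in auto)

lemma frob_inner_add_smult_self:
  assumes "A \<in> carrier_mat d d" "H \<in> carrier_mat d d"
  shows "frob_inner d (A + complex_of_real t \<cdot>\<^sub>m H) (A + complex_of_real t \<cdot>\<^sub>m H) =
    frob_inner d A A + 2 * t * frob_inner d A H + t\<^sup>2 * frob_inner d H H"
proof -
  have "Re (cnj (a + complex_of_real t * h) * (a + complex_of_real t * h)) =
      Re (cnj a * a) + 2 * t * Re (cnj a * h) + t\<^sup>2 * Re (cnj h * h)" for a h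
    by (simp add: algebra_simps power2_eq_square)
  with assms show ?thesis
    unfolding frob_inner_def by (simp add: sum.distrib sum_distrib_left algebra_simps)
qed

lemma frob_inner_diff_left:
  "A \<in> carrier_mat d d \<Longrightarrow> B \<in> carrier_mat d d \<Longrightarrow>
    frob_inner d (A - B) C = frob_inner d A C - frob_inner d B C"
  unfolding frob_inner_def by (simp add: sum_subtractf ring_distribs)

lemma frob_inner_diff_right:
  "B \<in> carrier_mat d d \<Longrightarrow> C \<in> carrier_mat d d \<Longrightarrow>
    frob_inner d A (B - C) = frob_inner d A B - frob_inner d A C"
  unfolding frob_inner_def by (simp add: sum_subtractf ring_distribs)

lemma frob_inner_smult_left:
  "A \<in> carrier_mat d d \<Longrightarrow> frob_inner d (complex_of_real c \<cdot>\<^sub>m A) B = c * frob_inner d A B"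
  unfolding frob_inner_def by (simp add: sum_distrib_left algebra_simps)

lemma frob_inner_one_left:
  "B \<in> carrier_mat d d \<Longrightarrow> frob_inner d (1\<^sub>m d) B = Re (trace_mat B)"
  unfolding frob_inner_def trace_mat_def by (simp add: Re_sum sum_lessThan_eq_single)

lemma Re_trace_mat_hermitian_mult:
  assumes herm: "hermitian A" and carr: "A \<in> carrier_mat d d" "B \<in> carrier_mat d d"
  shows "Re (trace_mat (A * B)) = frob_inner d A B"
proof -
  have herm_entry: "A $$ (i, j) = cnj (A $$ (j, i))" if "i \<in> {..<d}" "j \<in> {..<d}" for i j
    using hermitianD[OF herm, of i j] carr that by simp
  have "trace_mat (A * B) = (\<Sum>i<d. \<Sum>j<d. A $$ (i, j) * B $$ (j, i))"
    by (rule trace_mat_mult[OF carr])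
  also have "\<dots> = (\<Sum>i<d. \<Sum>j<d. cnj (A $$ (j, i)) * B $$ (j, i))"
    by (intro sum.cong refl) (metis herm_entry)
  also have "\<dots> = (\<Sum>j<d. \<Sum>i<d. cnj (A $$ (j, i)) * B $$ (j, i))"
    by (rule sum.swap)
  finally show ?thesis unfolding frob_inner_def by (simp add: Re_sum)
qed

lemma nonneg_if_quadratic_nonneg_near_0:
  fixes G H :: real
  assumes "\<And>t. 0 < t \<Longrightarrow> t \<le> 1 \<Longrightarrow> 0 \<le> 2 * t * G + t\<^sup>2 * H"
  shows "0 \<le> G"
proof -
  have "0 \<le> 2 * G + inverse (real (Suc N)) * H" for N
  proof -
    define t where "t = inverse (real (Suc N))"
    have "0 < t" "t \<le> 1" by (simp_all add: t_def field_simps)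
    then have "0 \<le> 2 * t * G + t\<^sup>2 * H" by (rule assms)
    also have "2 * t * G + t\<^sup>2 * H = t * (2 * G + t * H)" by (simp add: algebra_simps power2_eq_square)
    finally have "0 \<le> t * (2 * G + t * H)" .
    with \<open>0 < t\<close> show ?thesis by (simp add: zero_le_mult_iff t_def)
  qed
  moreover have "(\<lambda>N. 2 * G + inverse (real (Suc N)) * H) \<longlonglongrightarrow> 2 * G + 0 * H"
    by (intro tendsto_intros LIMSEQ_inverse_real_of_nat)
  ultimately have "0 \<le> 2 * G + 0 * H" by (intro LIMSEQ_le_const) auto
  then show ?thesis by simp
qed

lemma frob_inner_nonneg_if_nearest:
  assumes "A \<in> carrier_mat d d" "H \<in> carrier_mat d d"
    and nearest: "\<And>t. 0 < t \<Longrightarrow> t \<le> 1 \<Longrightarrow>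
      frob_inner d A A \<le> frob_inner d (A + complex_of_real t \<cdot>\<^sub>m H) (A + complex_of_real t \<cdot>\<^sub>m H)"
  shows "0 \<le> frob_inner d A H"
proof (rule nonneg_if_quadratic_nonneg_near_0)
  fix t :: real assume "0 < t" "t \<le> 1"
  with nearest[of t] frob_inner_add_smult_self[OF assms(1,2), of t]
  show "0 \<le> 2 * t * frob_inner d A H + t\<^sup>2 * frob_inner d H H" by simp
qed

lemma product_mixture_attains_min:
  fixes f :: "complex mat \<Rightarrow> real"
  assumes "0 < m" "0 < n" "0 < K" and nonneg: "\<And>Y. 0 \<le> f Y"
    and cont: "\<And>Y Z. (\<And>i j. i < m * n \<Longrightarrow> j < m * n \<Longrightarrow> (\<lambda>N. Y N $$ (i, j)) \<longlonglongrightarrow> Z $$ (i, j)) \<Longrightarrow>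
      (\<lambda>N. f (Y N)) \<longlonglongrightarrow> f Z"
  obtains q A B where "product_ensemble m n K q A B"
    "\<And>p A' B'. product_ensemble m n K p A' B' \<Longrightarrow>
      f (product_mixture m n K q A B) \<le> f (product_mixture m n K p A' B')"
proof -
  define F where "F = {f (product_mixture m n K p A B) | p A B. product_ensemble m n K p A B}"
  have "product_ensemble m n K (\<lambda>k. if k = 0 then 1 else 0) (\<lambda>_. basis_state m) (\<lambda>_. basis_state n)"
    using assms(1-3) is_state_basis_state by (simp add: product_ensemble_def)
  then have "F \<noteq> {}" unfolding F_def by blast
  have "bdd_below F" unfolding F_def bdd_below_def using nonneg by blast
  define \<delta> where "\<delta> = Inf F"
  have lower: "\<delta> \<le> f (product_mixture m n K p A B)" if "product_ensemble m n K p A B" for p A B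
    unfolding \<delta>_def using \<open>bdd_below F\<close> that by (intro cInf_lower) (auto simp: F_def)
  have "\<exists>p A B. product_ensemble m n K p A B \<and>
      f (product_mixture m n K p A B) < \<delta> + inverse (real (Suc N))" for N
  proof -
    have "Inf F < \<delta> + inverse (real (Suc N))" unfolding \<delta>_def by simp
    then show ?thesis using cInf_less_iff[OF \<open>F \<noteq> {}\<close> \<open>bdd_below F\<close>] unfolding F_def by blast
  qed
  then obtain p A B where ens: "\<And>N. product_ensemble m n K (p N) (A N) (B N)"
    and close: "\<And>N. f (product_mixture m n K (p N) (A N) (B N)) < \<delta> + inverse (real (Suc N))"
    by metis
  define val where "val N = f (product_mixture m n K (p N) (A N) (B N))" for N
  have "val \<longlonglongrightarrow> \<delta>"
  proof (rule tendsto_sandwich)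
    show "\<forall>\<^sub>F N in sequentially. \<delta> \<le> val N" using lower ens by (simp add: val_def)
    show "\<forall>\<^sub>F N in sequentially. val N \<le> \<delta> + inverse (real (Suc N))"
      using close by (simp add: val_def less_imp_le)
    have "(\<lambda>N. \<delta> + inverse (real (Suc N))) \<longlonglongrightarrow> \<delta> + 0"
      by (intro tendsto_intros LIMSEQ_inverse_real_of_nat)
    then show "(\<lambda>N. \<delta> + inverse (real (Suc N))) \<longlonglongrightarrow> \<delta>" by simp
  qed simp
  obtain r q A' B' where r: "strict_mono r" and ens': "product_ensemble m n K q A' B'"
    and lim: "\<And>i j. i < m * n \<Longrightarrow> j < m * n \<Longrightarrow>
      (\<lambda>N. product_mixture m n K (p (r N)) (A (r N)) (B (r N)) $$ (i, j))
        \<longlonglongrightarrow> product_mixture m n K q A' B' $$ (i, j)"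
    by (rule product_ensemble_convergent_subseq[of m n K p A B, OF ens]) blast
  have "(\<lambda>N. val (r N)) \<longlonglongrightarrow> f (product_mixture m n K q A' B')"
    unfolding val_def by (rule cont[OF lim])
  moreover have "(\<lambda>N. val (r N)) \<longlonglongrightarrow> \<delta>"
    using LIMSEQ_subseq_LIMSEQ[OF \<open>val \<longlonglongrightarrow> \<delta>\<close> r] by (simp add: o_def)
  ultimately have "f (product_mixture m n K q A' B') = \<delta>" by (rule LIMSEQ_unique)
  with ens' lower show ?thesis using that by metis
qed

lemma exists_nearest_separable:
  assumes x: "x \<in> carrier_mat (m * n) (m * n)" and "0 < m" "0 < n"
  shows "\<exists>z. separable m n z \<and> (\<forall>\<sigma>. separable m n \<sigma> \<longrightarrow>
    frob_inner (m * n) (z - x) (z - x) \<le> frob_inner (m * n) (\<sigma> - x) (\<sigma> - x))"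
proof -
  define D where "D Y = frob_inner (m * n) (Y - x) (Y - x)" for Y
  have D_entries: "D Y = (\<Sum>i<m * n. \<Sum>j<m * n.
      Re (cnj (Y $$ (i, j) - x $$ (i, j)) * (Y $$ (i, j) - x $$ (i, j))))" for Y
    using x by (simp add: D_def frob_inner_def)
  have D_nonneg: "0 \<le> D Y" for Y unfolding D_def by (rule frob_inner_self_nonneg)
  have D_cont: "(\<lambda>N. D (Y N)) \<longlonglongrightarrow> D Z"
    if "\<And>i j. i < m * n \<Longrightarrow> j < m * n \<Longrightarrow> (\<lambda>N. Y N $$ (i, j)) \<longlonglongrightarrow> Z $$ (i, j)" for Y Z
    unfolding D_entries by (intro tendsto_intros that) auto
  have "0 < caratheodory_bound m n" by (simp add: caratheodory_bound_def)
  show ?thesis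
  proof (rule product_mixture_attains_min[of m n "caratheodory_bound m n" D,
        OF \<open>0 < m\<close> \<open>0 < n\<close> \<open>0 < caratheodory_bound m n\<close> D_nonneg D_cont])
    fix q A B
    assume ens: "product_ensemble m n (caratheodory_bound m n) q A B"
      and min: "\<And>p A' B'. product_ensemble m n (caratheodory_bound m n) p A' B' \<Longrightarrow>
        D (product_mixture m n (caratheodory_bound m n) q A B) \<le>
        D (product_mixture m n (caratheodory_bound m n) p A' B')"
    have "D (product_mixture m n (caratheodory_bound m n) q A B) \<le> D \<sigma>" if "separable m n \<sigma>" for \<sigma>
      using that by (metis separableE product_mixture_caratheodory min)
    moreover have "separable m n (product_mixture m n (caratheodory_bound m n) q A B)"
      unfolding separable_iff_product_mixture using ens by blast
    ultimately show ?thesis unfolding D_def by blast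
  qed
qed

lemma frob_inner_diff_self_pos:
  assumes A: "A \<in> carrier_mat d d" and B: "B \<in> carrier_mat d d" and "A \<noteq> B"
  shows "0 < frob_inner d (A - B) (A - B)"
proof (rule ccontr)
  assume "\<not> 0 < frob_inner d (A - B) (A - B)"
  with frob_inner_self_nonneg have "frob_inner d (A - B) (A - B) = 0" by (metis order_le_less)
  with B have zero: "A - B = 0\<^sub>m d d" by (intro frob_inner_self_eq_0_imp_zero) (auto simp: minus_carrier_mat)
  have "A $$ (i, j) = B $$ (i, j)" if "i < d" "j < d" for i j
  proof -
    have "(A - B) $$ (i, j) = 0" using zero that by simp
    with that B show ?thesis by simp
  qed
  with A B \<open>A \<noteq> B\<close> show False by (metis eq_matI carrier_matD)
qed

lemma nearest_separable_variational:
  assumes x: "x \<in> carrier_mat (m * n) (m * n)" and z: "separable m n z"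
    and nearest: "\<And>\<sigma>. separable m n \<sigma> \<Longrightarrow>
      frob_inner (m * n) (z - x) (z - x) \<le> frob_inner (m * n) (\<sigma> - x) (\<sigma> - x)"
    and \<sigma>: "separable m n \<sigma>"
  shows "0 \<le> frob_inner (m * n) (z - x) (\<sigma> - z)"
proof (rule frob_inner_nonneg_if_nearest)
  have z_carr: "z \<in> carrier_mat (m * n) (m * n)" and \<sigma>_carr: "\<sigma> \<in> carrier_mat (m * n) (m * n)"
    using z \<sigma> by (simp_all add: separable_carrier)
  with x show "z - x \<in> carrier_mat (m * n) (m * n)" "\<sigma> - z \<in> carrier_mat (m * n) (m * n)"
    by (simp_all add: minus_carrier_mat)
  fix t :: real assume t: "0 < t" "t \<le> 1"
  have "separable m n (complex_of_real (1 - t) \<cdot>\<^sub>m z + complex_of_real t \<cdot>\<^sub>m \<sigma>)"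
    using z \<sigma> t by (intro separable_convex_comb) auto
  moreover have "complex_of_real (1 - t) \<cdot>\<^sub>m z + complex_of_real t \<cdot>\<^sub>m \<sigma> - x =
      z - x + complex_of_real t \<cdot>\<^sub>m (\<sigma> - z)"
    using z_carr \<sigma>_carr x by (intro eq_matI) (simp_all add: algebra_simps)
  ultimately show "frob_inner (m * n) (z - x) (z - x) \<le>
      frob_inner (m * n) (z - x + complex_of_real t \<cdot>\<^sub>m (\<sigma> - z)) (z - x + complex_of_real t \<cdot>\<^sub>m (\<sigma> - z))"
    using nearest by metis
qed

text \<open>The affine functional \<open>Y \<mapsto> \<langle>z - x, Y - z\<rangle>\<close> on trace-one matrices, written as an
  observable; it vanishes on the supporting hyperplane at the separable state \<open>z\<close> nearest to \<open>x\<close>.\<close>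

definition hyperplane_witness :: "nat \<Rightarrow> complex mat \<Rightarrow> complex mat \<Rightarrow> complex mat" where
  "hyperplane_witness d z x = z - x - complex_of_real (frob_inner d (z - x) z) \<cdot>\<^sub>m 1\<^sub>m d"

lemma hyperplane_witness_carrier:
  "x \<in> carrier_mat d d \<Longrightarrow> hyperplane_witness d z x \<in> carrier_mat d d"
  unfolding hyperplane_witness_def by (simp add: minus_carrier_mat)

lemma hermitian_hyperplane_witness:
  assumes z: "hermitian z" "z \<in> carrier_mat d d" and x: "hermitian x" "x \<in> carrier_mat d d"
  shows "hermitian (hyperplane_witness d z x)"
  unfolding hermitian_def
proof (intro conjI allI impI)
  fix i j assume "i < dim_row (hyperplane_witness d z x)" "j < dim_row (hyperplane_witness d z x)"
  then have "i < d" "j < d" using hyperplane_witness_carrier[OF x(2), of z] by auto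
  then show "hyperplane_witness d z x $$ (i, j) = cnj (hyperplane_witness d z x $$ (j, i))"
    using hermitianD[OF z(1), of i j] hermitianD[OF x(1), of i j] z(2) x(2)
    by (auto simp: hyperplane_witness_def)
qed (use hyperplane_witness_carrier[OF x(2), of z] in simp)

lemma Re_trace_hyperplane_witness:
  assumes "hermitian z" "z \<in> carrier_mat d d" "hermitian x" "x \<in> carrier_mat d d"
    and Y: "Y \<in> carrier_mat d d" "trace_mat Y = 1"
  shows "Re (trace_mat (hyperplane_witness d z x * Y)) = frob_inner d (z - x) (Y - z)"
proof -
  define c where "c = frob_inner d (z - x) z"
  have W: "hyperplane_witness d z x = z - x - complex_of_real c \<cdot>\<^sub>m 1\<^sub>m d"
    by (simp add: hyperplane_witness_def c_def)
  have "Re (trace_mat (hyperplane_witness d z x * Y)) = frob_inner d (hyperplane_witness d z x) Y"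
    by (rule Re_trace_mat_hermitian_mult[OF hermitian_hyperplane_witness[OF assms(1-4)]
          hyperplane_witness_carrier[OF assms(4)] Y(1)])
  also have "\<dots> = frob_inner d (z - x) Y - c"
    unfolding W using assms
    by (simp add: minus_carrier_mat frob_inner_diff_left frob_inner_smult_left frob_inner_one_left)
  also have "\<dots> = frob_inner d (z - x) (Y - z)"
    using assms by (simp add: c_def frob_inner_diff_right)
  finally show ?thesis .
qed

theorem entangled_imp_ex_ent_witness:
  assumes ent: "entangled m n x" shows "\<exists>W. ent_witness m n W \<and> detects W x"
proof -
  have "is_state (m * n) x" and "\<not> separable m n x" using ent unfolding entangled_def by auto
  then have x: "x \<in> carrier_mat (m * n) (m * n)" "hermitian x" "trace_mat x = 1"
    unfolding is_state_def psd_def by auto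
  have "0 < m" "0 < n" using x(1,3) unfolding trace_mat_def by (auto intro: gr0I)
  with x(1) obtain z where z: "separable m n z"
    and nearest: "\<And>\<sigma>. separable m n \<sigma> \<Longrightarrow>
      frob_inner (m * n) (z - x) (z - x) \<le> frob_inner (m * n) (\<sigma> - x) (\<sigma> - x)"
    using exists_nearest_separable by blast
  have z_carr: "z \<in> carrier_mat (m * n) (m * n)" and "hermitian z"
    using z by (simp_all add: separable_carrier separable_hermitian)
  define W where "W = hyperplane_witness (m * n) z x"
  note Re_trace_W = Re_trace_hyperplane_witness[OF \<open>hermitian z\<close> z_carr x(2,1), folded W_def]
  have "z \<noteq> x" using z \<open>\<not> separable m n x\<close> by blast
  then have "frob_inner (m * n) (z - x) (x - z) < 0"
    using frob_inner_diff_self_pos[OF z_carr x(1)] x(1) z_carr by (simp add: frob_inner_diff_right)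
  then have "detects W x" unfolding detects_def using Re_trace_W[OF x(1,3)] by simp
  moreover have "0 \<le> Re (trace_mat (W * \<sigma>))" if "separable m n \<sigma>" for \<sigma>
    using Re_trace_W nearest_separable_variational[OF x(1) z nearest that]
      separable_carrier[OF that] separable_trace[OF that] by simp
  moreover have "W \<in> carrier_mat (m * n) (m * n)" "hermitian W"
    using hyperplane_witness_carrier[OF x(1)] hermitian_hyperplane_witness[OF \<open>hermitian z\<close> z_carr x(2,1)]
    by (simp_all add: W_def)
  ultimately have "ent_witness m n W" unfolding ent_witness_def using ent by blast
  with \<open>detects W x\<close> show ?thesis by blast
qed

section \<open>Real witnesses\<close>

lemma ent_witness_carrier: "ent_witness m n W \<Longrightarrow> W \<in> carrier_mat (m * n) (m * n)"
  unfolding ent_witness_def by simp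

lemma real_witness_detects_conj_iff:
  assumes "real_mat W" "W \<in> carrier_mat d d" "\<rho> \<in> carrier_mat d d"
  shows "detects W (mat_cnj \<rho>) \<longleftrightarrow> detects W \<rho>"
    and "detects W (mat_realpart \<rho>) \<longleftrightarrow> detects W \<rho>"
  using assms detects_mat_cnj_iff detects_mat_realpart_iff
    real_mat_imp_mat_cnj_eq real_mat_imp_mat_realpart_eq by metis+

lemma real_state_detects_conj_iff:
  assumes "real_mat \<rho>" "W \<in> carrier_mat d d" "\<rho> \<in> carrier_mat d d"
  shows "detects (mat_cnj W) \<rho> \<longleftrightarrow> detects W \<rho>"
    and "detects (mat_realpart W) \<rho> \<longleftrightarrow> detects W \<rho>"
  using assms detects_mat_cnj_iff detects_mat_realpart_iff
    real_mat_imp_mat_cnj_eq real_mat_imp_mat_realpart_eq by metis+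

lemma ex_real_witness_iff:
  assumes ent: "entangled m n \<rho>"
  shows "(\<exists>W. ent_witness m n W \<and> real_mat W \<and> detects W \<rho>) \<longleftrightarrow>
    entangled m n (mat_realpart \<rho>)"
proof
  assume "\<exists>W. ent_witness m n W \<and> real_mat W \<and> detects W \<rho>"
  then obtain W where W: "ent_witness m n W" "real_mat W" "detects W \<rho>" by blast
  then have "detects W (mat_realpart \<rho>)"
    using real_witness_detects_conj_iff(2) ent_witness_carrier entangled_carrier[OF ent] by blast
  with W(1) ent show "entangled m n (mat_realpart \<rho>)"
    using ent_witness_detects_imp_not_separable is_state_mat_realpart unfolding entangled_def by blast
next
  assume ent_re: "entangled m n (mat_realpart \<rho>)"
  then obtain W where W: "ent_witness m n W" "detects W (mat_realpart \<rho>)"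
    using entangled_imp_ex_ent_witness by blast
  have carr: "W \<in> carrier_mat (m * n) (m * n)" "\<rho> \<in> carrier_mat (m * n) (m * n)"
    using W(1) ent by (simp_all add: ent_witness_carrier entangled_carrier)
  then have "detects (mat_realpart W) (mat_realpart \<rho>)" "detects (mat_realpart W) \<rho>"
    using W(2) real_state_detects_conj_iff(2)[OF real_mat_mat_realpart] detects_mat_realpart_iff
    by (simp_all add: real_mat_imp_mat_realpart_eq[OF real_mat_mat_realpart])
  then show "\<exists>W. ent_witness m n W \<and> real_mat W \<and> detects W \<rho>"
    using W(1) ent_re ent_witness_mat_realpart real_mat_mat_realpart by blast
qed

theorem theorem1:
  fixes m n :: nat
  shows
   "(\<forall>W \<rho>. ent_witness m n W \<and> real_mat W \<and> entangled m n \<rho> \<and> detects W \<rho> \<longrightarrow>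
        detects W (mat_cnj \<rho>) \<and> detects W (mat_realpart \<rho>)) \<and>
    (\<forall>W \<rho>. entangled m n \<rho> \<and> real_mat \<rho> \<and> ent_witness m n W \<and> detects W \<rho> \<longrightarrow>
        ent_witness m n (mat_cnj W) \<and> detects (mat_cnj W) \<rho> \<and>
        ent_witness m n (mat_realpart W) \<and> detects (mat_realpart W) \<rho>) \<and>
    (\<forall>\<rho>. entangled m n \<rho> \<longrightarrow>
        ((\<exists>W. ent_witness m n W \<and> real_mat W \<and> detects W \<rho>) \<longleftrightarrow>
         (real_mat (mat_realpart \<rho>) \<and> entangled m n (mat_realpart \<rho>))))"
proof (intro conjI allI impI)
  fix W \<rho> assume "ent_witness m n W \<and> real_mat W \<and> entangled m n \<rho> \<and> detects W \<rho>"
  then show "detects W (mat_cnj \<rho>)" "detects W (mat_realpart \<rho>)"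
    using real_witness_detects_conj_iff ent_witness_carrier entangled_carrier by blast+
next
  fix W \<rho> assume W: "entangled m n \<rho> \<and> real_mat \<rho> \<and> ent_witness m n W \<and> detects W \<rho>"
  then show "detects (mat_cnj W) \<rho>" and det_re: "detects (mat_realpart W) \<rho>"
    using real_state_detects_conj_iff ent_witness_carrier entangled_carrier by blast+
  from W show "ent_witness m n (mat_cnj W)" by (simp add: ent_witness_mat_cnj)
  from W det_re show "ent_witness m n (mat_realpart W)" using ent_witness_mat_realpart by blast
next
  fix \<rho> assume "entangled m n \<rho>"
  then show "(\<exists>W. ent_witness m n W \<and> real_mat W \<and> detects W \<rho>) \<longleftrightarrow>
      real_mat (mat_realpart \<rho>) \<and> entangled m n (mat_realpart \<rho>)"
    by (simp add: ex_real_witness_iff real_mat_mat_realpart)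
qed

end
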